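(* Let $X$ be a real Banach space and $G$ an amenable Hausdorff topological group which is locally compact or SIN, acting continuously on $X$ by affine isometries, and let $M$ be a bi-invariant mean on $G$. Suppose $Q:X^{**}\to X^{**}$ is a bounded linear projection with $Q[X^{**}]=\kappa_X(X)$ such that $\pi(g)\zeta\in\ker Q$ for all $g\in G$ and $\zeta\in\ker Q$. Let $R_G:X\to X^{**}$, $R_G(x)(x^* )=M(g\mapsto x^*(\pi(g)x))$, and $I_G=\{x\in X:\pi(g)x=x\ \forall g\in G\}$. Then $P_G:=\kappa_X^{-1}\circ Q\circ R_G:X\to X$ is a projection of norm at most $\|Q\|$ with $P_G[X]=I_G$, and $\kappa_X(P_G[X])$ is a complemented subspace of $R_G[X]$ (complemented by the restriction of $Q$). Moreover, if some (equivalently every) orbit of the affine action is bounded, then $P_G(gx)=P_G(x)$ for all $g\in G$, $x\in X$.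
   Context: $\kappa_X:X\to X^{**}$ is the canonical embedding. For an action by affine isometries $(g,x)\mapsto gx$, $\pi(g)x:=gx-g0$ is its linear part (an action by linear isometries); the dual actions are $(\pi(g)x^* )(x)=x^*(\pi(g^{-1})x)$ on $X^*$ and $(\pi(g)\zeta)(x^* )=\zeta(\pi(g^{-1})x^* )$ on $X^{**}$. $G$ is amenable if it admits a left-invariant mean on the bounded left-uniformly continuous functions; a bi-invariant mean is a positive linear functional $M$ with $M(1)=1$ invariant under both left and right translations, defined on the bounded uniformly (left and right) continuous functions when $G$ is SIN and on $L_\infty(G)$ (w.r.t. Haar measure) when $G$ is locally compact. $G$ is SIN if every neighborhood $U$ of $e$ contains a neighborhood $V$ of $e$ with $gVg^{-1}=V$ for all $g$. *)

theory Defs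
  imports "HOL-Analysis.Analysis" "HOL-Probability.Probability"
begin

(* Groups: a Hausdorff topological group is a type of class
   {topological_group_add, t2_space}; the group law is written additively
   (it is NOT assumed commutative), identity 0, inverse uminus. *)

definition nbhd_of_zero :: "'g::topological_group_add set \<Rightarrow> bool" where
  "nbhd_of_zero U \<longleftrightarrow> (\<exists>W. open W \<and> 0 \<in> W \<and> W \<subseteq> U)"

definition SIN_group :: "'g::topological_group_add itself \<Rightarrow> bool" where
  "SIN_group _ \<longleftrightarrow>
     (\<forall>U::'g set. nbhd_of_zero U \<longrightarrow>
        (\<exists>V. nbhd_of_zero V \<and> V \<subseteq> U \<and> (\<forall>g. (\<lambda>v. g + v - g) ` V = V)))"

definition left_unif_cont :: "('g::topological_group_add \<Rightarrow> real) \<Rightarrow> bool" where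
  "left_unif_cont f \<longleftrightarrow>
     (\<forall>\<epsilon>>0. \<exists>U. nbhd_of_zero U \<and> (\<forall>h\<in>U. \<forall>x. \<bar>f (h + x) - f x\<bar> < \<epsilon>))"

definition right_unif_cont :: "('g::topological_group_add \<Rightarrow> real) \<Rightarrow> bool" where
  "right_unif_cont f \<longleftrightarrow>
     (\<forall>\<epsilon>>0. \<exists>U. nbhd_of_zero U \<and> (\<forall>h\<in>U. \<forall>x. \<bar>f (x + h) - f x\<bar> < \<epsilon>))"

definition LUCb :: "('g::topological_group_add \<Rightarrow> real) set" where
  "LUCb = {f. bounded (range f) \<and> left_unif_cont f}"

definition UCb :: "('g::topological_group_add \<Rightarrow> real) set" where
  "UCb = {f. bounded (range f) \<and> left_unif_cont f \<and> right_unif_cont f}"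

definition mean_on :: "('g \<Rightarrow> real) set \<Rightarrow> (('g \<Rightarrow> real) \<Rightarrow> real) \<Rightarrow> bool" where
  "mean_on D M \<longleftrightarrow>
     (\<forall>f\<in>D. \<forall>h\<in>D. \<forall>a b. M (\<lambda>x. a * f x + b * h x) = a * M f + b * M h) \<and>
     (\<forall>f\<in>D. (\<forall>x. 0 \<le> f x) \<longrightarrow> 0 \<le> M f) \<and>
     M (\<lambda>_. 1) = 1"

definition left_invariant_mean_on ::
  "('g::group_add \<Rightarrow> real) set \<Rightarrow> (('g \<Rightarrow> real) \<Rightarrow> real) \<Rightarrow> bool" where
  "left_invariant_mean_on D M \<longleftrightarrow> mean_on D M \<and>
     (\<forall>f\<in>D. \<forall>g. M (\<lambda>x. f (g + x)) = M f)"

definition bi_invariant_mean_on ::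
  "('g::group_add \<Rightarrow> real) set \<Rightarrow> (('g \<Rightarrow> real) \<Rightarrow> real) \<Rightarrow> bool" where
  "bi_invariant_mean_on D M \<longleftrightarrow> mean_on D M \<and>
     (\<forall>f\<in>D. \<forall>g. M (\<lambda>x. f (g + x)) = M f \<and> M (\<lambda>x. f (x + g)) = M f)"

definition amenable_group :: "'g::topological_group_add itself \<Rightarrow> bool" where
  "amenable_group _ \<longleftrightarrow> (\<exists>M. left_invariant_mean_on (LUCb :: ('g \<Rightarrow> real) set) M)"

definition left_haar_measure :: "'g::topological_group_add measure \<Rightarrow> bool" where
  "left_haar_measure \<mu> \<longleftrightarrow>
     sets \<mu> = sets borel \<and>
     (\<forall>A\<in>sets borel. \<forall>g. emeasure \<mu> ((\<lambda>x. g + x) ` A) = emeasure \<mu> A) \<and>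
     (\<forall>K. compact K \<longrightarrow> emeasure \<mu> K < \<infinity>) \<and>
     (\<forall>A\<in>sets borel. emeasure \<mu> A = (INF U\<in>{U. open U \<and> A \<subseteq> U}. emeasure \<mu> U)) \<and>
     (\<forall>U. open U \<longrightarrow> emeasure \<mu> U = (SUP K\<in>{K. compact K \<and> K \<subseteq> U}. emeasure \<mu> K)) \<and>
     emeasure \<mu> UNIV \<noteq> 0"

(* L_infinity(G): essentially bounded measurable functions; a functional on
   L_infinity (a space of a.e.-classes) is one that respects a.e. equality *)
definition Linf :: "'g measure \<Rightarrow> ('g \<Rightarrow> real) set" where
  "Linf \<mu> = {f. f \<in> borel_measurable \<mu> \<and> (\<exists>C. AE x in \<mu>. \<bar>f x\<bar> \<le> C)}"

definition bi_invariant_mean_Linf ::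
  "'g::topological_group_add measure \<Rightarrow> (('g \<Rightarrow> real) \<Rightarrow> real) \<Rightarrow> bool" where
  "bi_invariant_mean_Linf \<mu> M \<longleftrightarrow> bi_invariant_mean_on (Linf \<mu>) M \<and>
     (\<forall>f\<in>Linf \<mu>. \<forall>h\<in>Linf \<mu>. (AE x in \<mu>. f x = h x) \<longrightarrow> M f = M h)"

definition affine_isometric_action :: "('g::group_add \<Rightarrow> 'x::real_normed_vector \<Rightarrow> 'x) \<Rightarrow> bool" where
  "affine_isometric_action act \<longleftrightarrow>
     (\<forall>x. act 0 x = x) \<and>
     (\<forall>g h x. act (g + h) x = act g (act h x)) \<and>
     (\<forall>g x y. dist (act g x) (act g y) = dist x y) \<and>
     (\<forall>g x y t. act g ((1 - t) *\<^sub>R x + t *\<^sub>R y) = (1 - t) *\<^sub>R act g x + t *\<^sub>R act g y)"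

definition lin_part :: "('g \<Rightarrow> 'x::real_normed_vector \<Rightarrow> 'x) \<Rightarrow> 'g \<Rightarrow> 'x \<Rightarrow> 'x" where
  "lin_part act g x = act g x - act g 0"

definition dual_act :: "('g::group_add \<Rightarrow> 'x::real_normed_vector \<Rightarrow> 'x) \<Rightarrow> 'g
                          \<Rightarrow> ('x \<Rightarrow>\<^sub>L real) \<Rightarrow> ('x \<Rightarrow>\<^sub>L real)" where
  "dual_act act g xs = Blinfun (\<lambda>x. blinfun_apply xs (lin_part act (- g) x))"

definition bidual_act :: "('g::group_add \<Rightarrow> 'x::real_normed_vector \<Rightarrow> 'x) \<Rightarrow> 'g
                          \<Rightarrow> (('x \<Rightarrow>\<^sub>L real) \<Rightarrow>\<^sub>L real) \<Rightarrow> (('x \<Rightarrow>\<^sub>L real) \<Rightarrow>\<^sub>L real)" where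
  "bidual_act act g \<zeta> = Blinfun (\<lambda>xs. blinfun_apply \<zeta> (dual_act act (- g) xs))"

definition kappa :: "'x::real_normed_vector \<Rightarrow> (('x \<Rightarrow>\<^sub>L real) \<Rightarrow>\<^sub>L real)" where
  "kappa x = Blinfun (\<lambda>xs. blinfun_apply xs x)"

definition R_G :: "('g \<Rightarrow> 'x::real_normed_vector \<Rightarrow> 'x) \<Rightarrow> (('g \<Rightarrow> real) \<Rightarrow> real)
                     \<Rightarrow> 'x \<Rightarrow> (('x \<Rightarrow>\<^sub>L real) \<Rightarrow>\<^sub>L real)" where
  "R_G act M x = Blinfun (\<lambda>xs. M (\<lambda>g. blinfun_apply xs (lin_part act g x)))"

definition I_G :: "('g \<Rightarrow> 'x::real_normed_vector \<Rightarrow> 'x) \<Rightarrow> 'x set" where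
  "I_G act = {x. \<forall>g. lin_part act g x = x}"

definition P_G :: "('g \<Rightarrow> 'x::real_normed_vector \<Rightarrow> 'x) \<Rightarrow> (('g \<Rightarrow> real) \<Rightarrow> real)
       \<Rightarrow> ((('x \<Rightarrow>\<^sub>L real) \<Rightarrow>\<^sub>L real) \<Rightarrow>\<^sub>L (('x \<Rightarrow>\<^sub>L real) \<Rightarrow>\<^sub>L real)) \<Rightarrow> 'x \<Rightarrow> 'x" where
  "P_G act M Q x = inv kappa (blinfun_apply Q (R_G act M x))"

end

theory Submission
  imports Defs
begin

(* Averaging the coefficients g \<mapsto> x*(\<pi>(g)x) with M defines R_G x in X** of norm at most
   norm x, fixed by the bidual action because M is left invariant. As \<zeta> - Q \<zeta> lies in ker Q,
   which the bidual action preserves, Q commutes with the bidual action up to Q; so Q (R_G x)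
   is an invariant vector of \<kappa>(X), i.e. P_G x lies in I_G, while on I_G the coefficients
   are constant and P_G is the identity. The norm bound needs \<kappa> to be isometric, which is
   the Hahn-Banach theorem. For bounded orbits, gx = \<pi>(g)x + g0 and the coefficients of g0
   are differences of right translates, so right invariance of M gives R_G (gx) = R_G x. *)

section \<open>Norming functionals\<close>

text \<open>Partial linear functionals are encoded by their graphs, so that a chain of extensions
  is joined by taking the union.\<close>

definition norm_dominated_graph :: "('x::real_normed_vector \<times> real) set \<Rightarrow> bool" where
  "norm_dominated_graph G \<longleftrightarrow>
     (\<forall>a r s. (a, r) \<in> G \<longrightarrow> (a, s) \<in> G \<longrightarrow> r = s) \<and> (0, 0) \<in> G \<and>
     (\<forall>a r b s. (a, r) \<in> G \<longrightarrow> (b, s) \<in> G \<longrightarrow> (a + b, r + s) \<in> G) \<and>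
     (\<forall>a r c. (a, r) \<in> G \<longrightarrow> (c *\<^sub>R a, c * r) \<in> G) \<and>
     (\<forall>a r. (a, r) \<in> G \<longrightarrow> r \<le> norm a)"

lemma norm_dominated_graphI:
  assumes "\<And>a r s. (a, r) \<in> G \<Longrightarrow> (a, s) \<in> G \<Longrightarrow> r = s" and "(0, 0) \<in> G"
    and "\<And>a r b s. (a, r) \<in> G \<Longrightarrow> (b, s) \<in> G \<Longrightarrow> (a + b, r + s) \<in> G"
    and "\<And>a r c. (a, r) \<in> G \<Longrightarrow> (c *\<^sub>R a, c * r) \<in> G"
    and "\<And>a r. (a, r) \<in> G \<Longrightarrow> r \<le> norm a"
  shows "norm_dominated_graph G"
  using assms unfolding norm_dominated_graph_def by blast

context
  fixes G :: "('x::real_normed_vector \<times> real) set"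
  assumes G: "norm_dominated_graph G"
begin

lemma graph_functional: "(a, r) \<in> G \<Longrightarrow> (a, s) \<in> G \<Longrightarrow> r = s"
  and graph_zero: "(0, 0) \<in> G"
  and graph_add: "(a, r) \<in> G \<Longrightarrow> (b, s) \<in> G \<Longrightarrow> (a + b, r + s) \<in> G"
  and graph_scaleR: "(a, r) \<in> G \<Longrightarrow> (c *\<^sub>R a, c * r) \<in> G"
  and graph_le_norm: "(a, r) \<in> G \<Longrightarrow> r \<le> norm a"
  using G unfolding norm_dominated_graph_def by blast+

lemma graph_diff: "(a, r) \<in> G \<Longrightarrow> (b, s) \<in> G \<Longrightarrow> (a - b, r - s) \<in> G"
  using graph_add[of a r "-b" "-s"] graph_scaleR[of b s "-1"] by simp

lemma graph_extension_value:
  "\<exists>c. (\<forall>(a, r)\<in>G. r - norm (a - y) \<le> c) \<and> (\<forall>(b, s)\<in>G. c \<le> norm (b + y) - s)"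
proof -
  define S where "S = {r - norm (a - y) | a r. (a, r) \<in> G}"
  have sep: "r - norm (a - y) \<le> norm (b + y) - s" if "(a, r) \<in> G" "(b, s) \<in> G" for a r b s
  proof -
    have "r + s \<le> norm ((a - y) + (b + y))" using graph_le_norm[OF graph_add[OF that]] by simp
    also have "\<dots> \<le> norm (a - y) + norm (b + y)" by (rule norm_triangle_ineq)
    finally show ?thesis by simp
  qed
  have "S \<noteq> {}" using graph_zero unfolding S_def by blast
  moreover have "bdd_above S" unfolding S_def bdd_above_def using sep[OF _ graph_zero] by fastforce
  ultimately have "(\<forall>(a, r)\<in>G. r - norm (a - y) \<le> Sup S) \<and> (\<forall>(b, s)\<in>G. Sup S \<le> norm (b + y) - s)"
    by (auto intro!: cSup_upper cSup_least simp: S_def sep)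
  then show ?thesis ..
qed

lemma graph_extension_le_norm:
  assumes below: "\<forall>(a, r)\<in>G. r - norm (a - y) \<le> c"
    and above: "\<forall>(b, s)\<in>G. c \<le> norm (b + y) - s"
    and "(a, r) \<in> G"
  shows "r + t * c \<le> norm (a + t *\<^sub>R y)"
proof (cases t "0 :: real" rule: linorder_cases)
  case less
  define u where "u = - t"
  have u: "u > 0" using less by (simp add: u_def)
  have "u * (inverse u * r - norm (inverse u *\<^sub>R a - y)) = r - norm (u *\<^sub>R (inverse u *\<^sub>R a - y))"
    using u by (simp add: right_diff_distrib)
  also have "u *\<^sub>R (inverse u *\<^sub>R a - y) = a + t *\<^sub>R y"
    using u by (simp add: u_def scaleR_diff_right)
  finally have "r - norm (a + t *\<^sub>R y) = u * (inverse u * r - norm (inverse u *\<^sub>R a - y))" ..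
  also have "\<dots> \<le> u * c"
    using below graph_scaleR[OF \<open>(a, r) \<in> G\<close>, of "inverse u"] u by (auto intro!: mult_left_mono)
  finally show ?thesis by (simp add: u_def)
next
  case equal
  then show ?thesis using graph_le_norm[OF \<open>(a, r) \<in> G\<close>] by simp
next
  case greater
  have "t * (norm (inverse t *\<^sub>R a + y) - inverse t * r) = norm (t *\<^sub>R (inverse t *\<^sub>R a + y)) - r"
    using greater by (simp add: right_diff_distrib)
  also have "t *\<^sub>R (inverse t *\<^sub>R a + y) = a + t *\<^sub>R y"
    using greater by (simp add: scaleR_add_right)
  finally have "norm (a + t *\<^sub>R y) - r = t * (norm (inverse t *\<^sub>R a + y) - inverse t * r)" ..
  also have "\<dots> \<ge> t * c"
    using above graph_scaleR[OF \<open>(a, r) \<in> G\<close>, of "inverse t"] greater by (auto intro!: mult_left_mono)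
  finally show ?thesis by simp
qed

lemma graph_new_direction_unique:
  assumes y: "y \<notin> fst ` G" and "(a, r) \<in> G" "(b, s) \<in> G"
    and eq: "a + t *\<^sub>R y = b + t' *\<^sub>R y"
  shows "t = t'"
proof (rule ccontr)
  assume "t \<noteq> t'"
  have "(inverse (t' - t) *\<^sub>R (a - b), inverse (t' - t) * (r - s)) \<in> G"
    using graph_scaleR graph_diff assms(2,3) by blast
  moreover have "y = inverse (t' - t) *\<^sub>R ((t' - t) *\<^sub>R y)"
    using \<open>t \<noteq> t'\<close> by simp
  moreover have "(t' - t) *\<^sub>R y = a - b"
    using eq by (simp add: algebra_simps)
  ultimately show False using y by force
qed

lemma graph_extension_dominated:
  assumes y: "y \<notin> fst ` G"
    and below: "\<forall>(a, r)\<in>G. r - norm (a - y) \<le> c"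
    and above: "\<forall>(b, s)\<in>G. c \<le> norm (b + y) - s"
  shows "norm_dominated_graph {(a + t *\<^sub>R y, r + t * c) | a r t. (a, r) \<in> G}"
    (is "norm_dominated_graph ?G'")
proof -
  have G'I: "(a, r) \<in> G \<Longrightarrow> (a + t *\<^sub>R y, r + t * c) \<in> ?G'" for a r t
    by blast
  have G'E: "(p, r') \<in> ?G' \<Longrightarrow>
      (\<And>a r t. (a, r) \<in> G \<Longrightarrow> p = a + t *\<^sub>R y \<Longrightarrow> r' = r + t * c \<Longrightarrow> thesis) \<Longrightarrow> thesis"
    for p r' thesis by blast
  show ?thesis
  proof (rule norm_dominated_graphI)
    fix p r' s' assume "(p, r') \<in> ?G'" "(p, s') \<in> ?G'"
    then obtain a r t b s t' where "(a, r) \<in> G" "p = a + t *\<^sub>R y" "r' = r + t * c"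
      and "(b, s) \<in> G" "p = b + t' *\<^sub>R y" "s' = s + t' * c"
      by (elim G'E)
    moreover from this have "t = t'" using graph_new_direction_unique[OF y] by metis
    ultimately show "r' = s'" using graph_functional by auto
  next
    show "(0, 0) \<in> ?G'" using G'I[OF graph_zero, of 0] by simp
  next
    fix p r' q s' assume "(p, r') \<in> ?G'" "(q, s') \<in> ?G'"
    then obtain a r t b s t' where "(a, r) \<in> G" "p = a + t *\<^sub>R y" "r' = r + t * c"
      and "(b, s) \<in> G" "q = b + t' *\<^sub>R y" "s' = s + t' * c"
      by (elim G'E)
    then show "(p + q, r' + s') \<in> ?G'"
      using G'I[OF graph_add, of a r b s "t + t'"] by (simp add: algebra_simps)
  next
    fix p r' d assume "(p, r') \<in> ?G'"
    then obtain a r t where "(a, r) \<in> G" "p = a + t *\<^sub>R y" "r' = r + t * c"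
      by (elim G'E)
    then show "(d *\<^sub>R p, d * r') \<in> ?G'"
      using G'I[OF graph_scaleR, of a r d "d * t"] by (simp add: algebra_simps)
  next
    fix p r' assume "(p, r') \<in> ?G'"
    then show "r' \<le> norm p"
      by (elim G'E) (simp add: graph_extension_le_norm[OF below above])
  qed
qed

lemma graph_extension:
  assumes y: "y \<notin> fst ` G"
  obtains G' where "norm_dominated_graph G'" "G \<subset> G'"
proof -
  obtain c where below: "\<forall>(a, r)\<in>G. r - norm (a - y) \<le> c"
    and above: "\<forall>(b, s)\<in>G. c \<le> norm (b + y) - s"
    using graph_extension_value[of y] by (elim exE conjE)
  define G' where "G' = {(a + t *\<^sub>R y, r + t * c) | a r t. (a, r) \<in> G}"
  have G'I: "(a, r) \<in> G \<Longrightarrow> (a + t *\<^sub>R y, r + t * c) \<in> G'" for a r t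
    unfolding G'_def by blast
  have "G \<subseteq> G'" using G'I[of _ _ 0] by auto
  moreover have "(y, c) \<in> G' - G" using G'I[OF graph_zero, of 1] y by force
  moreover have "norm_dominated_graph G'"
    unfolding G'_def by (rule graph_extension_dominated[OF y below above])
  ultimately show ?thesis using that by blast
qed

end

lemma norm_dominated_graph_Union_chain:
  assumes "C \<noteq> {}" and graphs: "\<forall>G\<in>C. norm_dominated_graph G"
    and chain: "\<And>G H. G \<in> C \<Longrightarrow> H \<in> C \<Longrightarrow> G \<subseteq> H \<or> H \<subseteq> G"
  shows "norm_dominated_graph (\<Union>C)"
proof (rule norm_dominated_graphI)
  have common: "\<exists>G\<in>C. p \<in> G \<and> q \<in> G" if "p \<in> \<Union>C" "q \<in> \<Union>C" for p q
    using that chain by blast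
  show "r = s" if "(a, r) \<in> \<Union>C" "(a, s) \<in> \<Union>C" for a r s
    using common[OF that] graphs graph_functional by blast
  show "(a + b, r + s) \<in> \<Union>C" if "(a, r) \<in> \<Union>C" "(b, s) \<in> \<Union>C" for a r b s
    using common[OF that] graphs graph_add by blast
  show "(0, 0) \<in> \<Union>C" using \<open>C \<noteq> {}\<close> graphs graph_zero by blast
  show "(c *\<^sub>R a, c * r) \<in> \<Union>C" if "(a, r) \<in> \<Union>C" for a r c
    using that graphs graph_scaleR by blast
  show "r \<le> norm a" if "(a, r) \<in> \<Union>C" for a r
    using that graphs graph_le_norm by blast
qed

lemma norm_dominated_graph_line:
  "norm_dominated_graph (range (\<lambda>c. (c *\<^sub>R x0, c * norm x0)))" (is "norm_dominated_graph ?L")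
proof (rule norm_dominated_graphI)
  show "r = s" if "(a, r) \<in> ?L" "(a, s) \<in> ?L" for a r s
    using that by (cases "x0 = 0") auto
  show "(a + b, r + s) \<in> ?L" if "(a, r) \<in> ?L" "(b, s) \<in> ?L" for a r b s
  proof -
    from that obtain c d where "(a, r) = (c *\<^sub>R x0, c * norm x0)" "(b, s) = (d *\<^sub>R x0, d * norm x0)"
      by blast
    then show ?thesis by (auto intro!: range_eqI[of _ _ "c + d"] simp: algebra_simps)
  qed
  show "(d *\<^sub>R a, d * r) \<in> ?L" if "(a, r) \<in> ?L" for a r d
  proof -
    from that obtain c where "(a, r) = (c *\<^sub>R x0, c * norm x0)" by blast
    then show ?thesis by (auto intro!: range_eqI[of _ _ "d * c"])
  qed
qed (auto intro!: range_eqI[of _ _ 0] mult_right_mono)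

lemma norm_dominated_graph_total_blinfun:
  assumes G: "norm_dominated_graph G" and total: "fst ` G = UNIV"
  obtains f :: "'x::real_normed_vector \<Rightarrow>\<^sub>L real"
  where "norm f \<le> 1" "\<And>a r. (a, r) \<in> G \<Longrightarrow> blinfun_apply f a = r"
proof -
  define val where "val a = (THE r. (a, r) \<in> G)" for a
  have val_in: "(a, val a) \<in> G" for a
  proof -
    obtain r where "(a, r) \<in> G" using total by (metis UNIV_I imageE prod.collapse)
    then have "\<exists>!r. (a, r) \<in> G" using graph_functional[OF G] by blast
    then show ?thesis unfolding val_def by (rule theI')
  qed
  have val_eq: "(a, r) \<in> G \<Longrightarrow> val a = r" for a r using graph_functional[OF G] val_in by blast
  have val_bound: "\<bar>val a\<bar> \<le> norm a" for a
    using graph_le_norm[OF G val_in[of a]] graph_le_norm[OF G graph_scaleR[OF G val_in[of a], of "-1"]]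
    by (simp add: val_eq)
  have "bounded_linear val"
    by (rule bounded_linear_intro[of _ 1])
      (use val_bound in \<open>auto intro: val_eq graph_add[OF G] graph_scaleR[OF G] val_in\<close>)
  with val_bound show ?thesis
    by (intro that[of "Blinfun val"])
      (auto intro!: norm_blinfun_bound simp: bounded_linear_Blinfun_apply val_eq)
qed

lemma exists_norming_functional:
  obtains f :: "'x::real_normed_vector \<Rightarrow>\<^sub>L real" where "blinfun_apply f x0 = norm x0" "norm f \<le> 1"
proof -
  define A where "A = {G. norm_dominated_graph G \<and> (x0, norm x0) \<in> G}"
  have "range (\<lambda>c. (c *\<^sub>R x0, c * norm x0)) \<in> A"
    unfolding A_def using norm_dominated_graph_line by (auto intro: range_eqI[of _ _ 1])
  moreover have "\<Union>C \<in> A" if "C \<noteq> {}" "subset.chain A C" for C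
    using that norm_dominated_graph_Union_chain[of C] unfolding A_def subset.chain_def by blast
  ultimately obtain G where "G \<in> A" and maximal: "\<And>H. H \<in> A \<Longrightarrow> G \<subseteq> H \<Longrightarrow> H = G"
    using subset_Zorn_nonempty[of A] by blast
  then have G: "norm_dominated_graph G" "(x0, norm x0) \<in> G" unfolding A_def by auto
  have "fst ` G = UNIV"
  proof (rule ccontr)
    assume "fst ` G \<noteq> UNIV"
    then obtain y where "y \<notin> fst ` G" by blast
    then obtain H where "norm_dominated_graph H" "G \<subset> H" using graph_extension[OF G(1)] by blast
    with maximal[of H] G(2) show False unfolding A_def by blast
  qed
  then obtain f :: "'x \<Rightarrow>\<^sub>L real" where "norm f \<le> 1" "\<And>a r. (a, r) \<in> G \<Longrightarrow> f a = r"
    using norm_dominated_graph_total_blinfun[OF G(1)] by blast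
  with G(2) show ?thesis using that by blast
qed

section \<open>The canonical embedding and affine isometric actions\<close>

lemma kappa_apply: "blinfun_apply (kappa x) xs = blinfun_apply xs x"
  unfolding kappa_def by (simp add: bounded_linear_Blinfun_apply[OF blinfun.bounded_linear_left])

lemma norm_kappa: "norm (kappa x) = norm x"
proof (rule antisym)
  show "norm (kappa x) \<le> norm x"
  proof (rule norm_blinfun_bound)
    show "norm (blinfun_apply (kappa x) xs) \<le> norm x * norm xs" for xs
      using norm_blinfun[of xs x] by (simp add: kappa_apply mult.commute)
  qed simp
  obtain f :: "'a \<Rightarrow>\<^sub>L real" where f: "blinfun_apply f x = norm x" "norm f \<le> 1"
    by (rule exists_norming_functional)
  have "norm x = norm (blinfun_apply (kappa x) f)" using f by (simp add: kappa_apply)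
  also have "\<dots> \<le> norm (kappa x) * norm f" by (rule norm_blinfun)
  also have "\<dots> \<le> norm (kappa x)" using f(2) by (simp add: mult_left_le)
  finally show "norm x \<le> norm (kappa x)" .
qed

lemma kappa_add: "kappa (x + y) = kappa x + kappa y"
  by (rule blinfun_eqI) (simp add: kappa_apply blinfun.add_left blinfun.add_right)

lemma kappa_scaleR: "kappa (c *\<^sub>R x) = c *\<^sub>R kappa x"
  by (rule blinfun_eqI) (simp add: kappa_apply blinfun.scaleR_left blinfun.scaleR_right)

lemma inj_kappa: "inj kappa"
proof (rule injI)
  fix x y :: "'a::real_normed_vector"
  assume "kappa x = kappa y"
  then have "kappa (x - y) = 0"
    using kappa_add[of "x - y" y] by simp
  then show "x = y" using norm_kappa[of "x - y"] by simp
qed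

context
  fixes act :: "'g::group_add \<Rightarrow> 'x::real_normed_vector \<Rightarrow> 'x"
  assumes act: "affine_isometric_action act"
begin

lemma act_zero: "act 0 x = x"
  and act_add: "act (g + h) x = act g (act h x)"
  and dist_act: "dist (act g x) (act g y) = dist x y"
  and act_affine: "act g ((1 - t) *\<^sub>R x + t *\<^sub>R y) = (1 - t) *\<^sub>R act g x + t *\<^sub>R act g y"
  using act unfolding affine_isometric_action_def by blast+

lemma lin_part_scaleR: "lin_part act g (c *\<^sub>R x) = c *\<^sub>R lin_part act g x"
  using act_affine[of g c 0 x] by (simp add: lin_part_def algebra_simps)

text \<open>Additivity comes from preservation of midpoints.\<close>

lemma lin_part_add: "lin_part act g (x + y) = lin_part act g x + lin_part act g y"
proof -
  have "(1/2) *\<^sub>R lin_part act g (x + y) = lin_part act g ((1/2) *\<^sub>R x + (1/2) *\<^sub>R y)"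
    by (simp only: lin_part_scaleR[symmetric] scaleR_add_right)
  also have "\<dots> = (1/2) *\<^sub>R lin_part act g x + (1/2) *\<^sub>R lin_part act g y"
    using act_affine[of g "1/2" x y] by (simp add: lin_part_def algebra_simps flip: scaleR_add_left)
  finally show ?thesis by (simp flip: scaleR_add_right)
qed

lemma norm_lin_part: "norm (lin_part act g x) = norm x"
  using dist_act[of g x 0] by (simp add: lin_part_def dist_norm)

lemma bounded_linear_lin_part: "bounded_linear (lin_part act g)"
  by (rule bounded_linear_intro[of _ 1]) (auto simp: lin_part_add lin_part_scaleR norm_lin_part)

lemma lin_part_diff: "lin_part act g (x - y) = lin_part act g x - lin_part act g y"
  using linear_diff[OF bounded_linear.linear[OF bounded_linear_lin_part]] .

lemma lin_part_zero: "lin_part act 0 x = x"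
  by (simp add: lin_part_def act_zero)

lemma lin_part_add_group: "lin_part act (g + h) x = lin_part act g (lin_part act h x)"
  by (simp add: lin_part_def[of act h] lin_part_diff) (simp add: lin_part_def act_add)

lemma lin_part_orbit_zero: "lin_part act g (act h 0) = act (g + h) 0 - act g 0"
  by (simp add: lin_part_def act_add)

lemma norm_lin_part_increment:
  "norm (lin_part act (g + h) x - lin_part act g x) = norm (lin_part act h x - lin_part act 0 x)"
  by (simp add: lin_part_add_group lin_part_zero norm_lin_part flip: lin_part_diff)

lemma norm_orbit_zero_increment: "norm (act (g + h) 0 - act g 0) = norm (act h 0 - act 0 0)"
  using norm_lin_part[of g "act h 0"] by (simp add: lin_part_orbit_zero act_zero)

lemma bounded_lin_part_orbit: "bounded (range (\<lambda>g. lin_part act g x))"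
  by (auto simp: bounded_iff norm_lin_part)

lemma bounded_orbit_zero:
  assumes "bounded (range (\<lambda>g. act g x))"
  shows "bounded (range (\<lambda>g. act g 0))"
proof -
  obtain B where B: "\<And>g. norm (act g x) \<le> B" using assms unfolding bounded_iff by auto
  have "norm (act g 0) \<le> B + norm x" for g
    using B[of g] dist_act[of g 0 x] norm_triangle_ineq[of "act g 0 - act g x" "act g x"]
    by (simp add: dist_norm norm_minus_commute)
  then show ?thesis unfolding bounded_iff by blast
qed

lemma dual_act_apply: "blinfun_apply (dual_act act g xs) y = blinfun_apply xs (lin_part act (- g) y)"
  unfolding dual_act_def
  by (simp add: bounded_linear_Blinfun_apply bounded_linear_compose[OF blinfun.bounded_linear_right
        bounded_linear_lin_part])

lemma bounded_linear_dual_act: "bounded_linear (dual_act act g)"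
proof (rule bounded_linear_intro[of _ 1])
  show "norm (dual_act act g xs) \<le> norm xs * 1" for xs
  proof (rule norm_blinfun_bound)
    show "norm (blinfun_apply (dual_act act g xs) y) \<le> norm xs * 1 * norm y" for y
      using norm_blinfun[of xs "lin_part act (- g) y"] by (simp add: dual_act_apply norm_lin_part)
  qed simp
qed (auto intro: blinfun_eqI simp: dual_act_apply blinfun.add_left blinfun.scaleR_left)

lemma bidual_act_apply:
  "blinfun_apply (bidual_act act g \<zeta>) xs = blinfun_apply \<zeta> (dual_act act (- g) xs)"
  unfolding bidual_act_def
  by (simp add: bounded_linear_Blinfun_apply bounded_linear_compose[OF blinfun.bounded_linear_right
        bounded_linear_dual_act])

lemma bidual_act_diff: "bidual_act act g (\<zeta> - \<eta>) = bidual_act act g \<zeta> - bidual_act act g \<eta>"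
  by (rule blinfun_eqI) (simp add: bidual_act_apply blinfun.diff_left)

lemma bidual_act_kappa: "bidual_act act g (kappa x) = kappa (lin_part act g x)"
  by (rule blinfun_eqI) (simp add: bidual_act_apply dual_act_apply kappa_apply)

end

section \<open>Averaging with a bi-invariant mean\<close>

locale invariant_mean_space =
  fixes D :: "('g::group_add \<Rightarrow> real) set" and M :: "('g \<Rightarrow> real) \<Rightarrow> real"
  assumes bi_invariant: "bi_invariant_mean_on D M"
    and lincomb_mem: "\<And>f h a b. f \<in> D \<Longrightarrow> h \<in> D \<Longrightarrow> (\<lambda>x. a * f x + b * h x) \<in> D"
    and const_one_mem: "(\<lambda>_. 1) \<in> D"
begin

lemma mean_lincomb: "f \<in> D \<Longrightarrow> h \<in> D \<Longrightarrow> M (\<lambda>x. a * f x + b * h x) = a * M f + b * M h"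
  and mean_nonneg: "f \<in> D \<Longrightarrow> (\<And>x. 0 \<le> f x) \<Longrightarrow> 0 \<le> M f"
  and mean_one: "M (\<lambda>_. 1) = 1"
  and mean_left_translate: "f \<in> D \<Longrightarrow> M (\<lambda>x. f (g + x)) = M f"
  and mean_right_translate: "f \<in> D \<Longrightarrow> M (\<lambda>x. f (x + g)) = M f"
  using bi_invariant unfolding bi_invariant_mean_on_def mean_on_def by blast+

lemma mean_const: "M (\<lambda>_. c) = c"
  using mean_lincomb[OF const_one_mem const_one_mem, of c 0] mean_one by simp

lemma abs_mean_le:
  assumes f: "f \<in> D" and bound: "\<And>x. \<bar>f x\<bar> \<le> C"
  shows "\<bar>M f\<bar> \<le> C"
proof -
  have "0 \<le> M (\<lambda>x. C * 1 + s * f x)" if "s = 1 \<or> s = -1" for s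
  proof (rule mean_nonneg)
    show "(\<lambda>x. C * 1 + s * f x) \<in> D" by (intro lincomb_mem const_one_mem f)
    show "0 \<le> C * 1 + s * f x" for x using bound[of x] that by (auto simp: abs_le_iff)
  qed
  moreover have "M (\<lambda>x. C * 1 + s * f x) = C + s * M f" for s
    using mean_lincomb[OF const_one_mem f] mean_one by simp
  ultimately have "0 \<le> C + 1 * M f" "0 \<le> C + (- 1) * M f" by metis+
  then show ?thesis by linarith
qed

lemma mean_right_difference:
  assumes k: "k \<in> D" and diff: "(\<lambda>x. k (x + g) - k x) \<in> D"
  shows "M (\<lambda>x. k (x + g) - k x) = 0"
proof -
  have "(\<lambda>x. 1 * (k (x + g) - k x) + 1 * k x) \<in> D" by (rule lincomb_mem[OF diff k])
  then have kg: "(\<lambda>x. k (x + g)) \<in> D" by simp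
  have "M (\<lambda>x. k (x + g) - k x) = M (\<lambda>x. k (x + g)) - M k"
    using mean_lincomb[OF kg k, of 1 "- 1"] by simp
  then show ?thesis using mean_right_translate[OF k] by simp
qed

end

locale invariant_projection = invariant_mean_space D M
  for D :: "('g::group_add \<Rightarrow> real) set" and M :: "('g \<Rightarrow> real) \<Rightarrow> real" +
  fixes act :: "'g \<Rightarrow> 'x::banach \<Rightarrow> 'x"
    and Q :: "(('x \<Rightarrow>\<^sub>L real) \<Rightarrow>\<^sub>L real) \<Rightarrow>\<^sub>L (('x \<Rightarrow>\<^sub>L real) \<Rightarrow>\<^sub>L real)"
  assumes act: "affine_isometric_action act"
    and orbit_coefficient_mem: "\<And>xs x. (\<lambda>g. blinfun_apply xs (lin_part act g x)) \<in> D"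
    and Q_idem: "\<forall>\<zeta>. Q (Q \<zeta>) = Q \<zeta>"
    and Q_range: "range (blinfun_apply Q) = range kappa"
    and Q_ker: "\<forall>g \<zeta>. Q \<zeta> = 0 \<longrightarrow> Q (bidual_act act g \<zeta>) = 0"
begin

lemma abs_mean_orbit_coefficient_le:
  "\<bar>M (\<lambda>g. blinfun_apply xs (lin_part act g x))\<bar> \<le> norm xs * norm x"
proof (rule abs_mean_le[OF orbit_coefficient_mem])
  show "\<bar>blinfun_apply xs (lin_part act g x)\<bar> \<le> norm xs * norm x" for g
    using norm_blinfun[of xs "lin_part act g x"] by (simp add: norm_lin_part[OF act])
qed

lemma bounded_linear_mean_orbit_coefficient:
  "bounded_linear (\<lambda>xs. M (\<lambda>g. blinfun_apply xs (lin_part act g x)))"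
proof (rule bounded_linear_intro[of _ "norm x"])
  show "M (\<lambda>g. blinfun_apply (xs + ys) (lin_part act g x)) =
      M (\<lambda>g. blinfun_apply xs (lin_part act g x)) + M (\<lambda>g. blinfun_apply ys (lin_part act g x))"
    for xs ys
    using mean_lincomb[OF orbit_coefficient_mem orbit_coefficient_mem, of 1 xs x 1 ys]
    by (simp add: blinfun.add_left)
  show "M (\<lambda>g. blinfun_apply (r *\<^sub>R xs) (lin_part act g x)) =
      r *\<^sub>R M (\<lambda>g. blinfun_apply xs (lin_part act g x))" for r xs
    using mean_lincomb[OF orbit_coefficient_mem orbit_coefficient_mem, of r xs x 0 xs]
    by (simp add: blinfun.scaleR_left)
qed (use abs_mean_orbit_coefficient_le in simp)

lemma R_G_apply: "blinfun_apply (R_G act M x) xs = M (\<lambda>g. blinfun_apply xs (lin_part act g x))"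
  unfolding R_G_def by (simp add: bounded_linear_Blinfun_apply[OF bounded_linear_mean_orbit_coefficient])

lemma norm_R_G_le: "norm (R_G act M x) \<le> norm x"
proof (rule norm_blinfun_bound)
  show "norm (blinfun_apply (R_G act M x) xs) \<le> norm x * norm xs" for xs
    using abs_mean_orbit_coefficient_le[of xs x] by (simp add: R_G_apply mult.commute)
qed simp

lemma R_G_add: "R_G act M (x + y) = R_G act M x + R_G act M y"
  by (rule blinfun_eqI)
    (use mean_lincomb[OF orbit_coefficient_mem orbit_coefficient_mem, of 1 _ x 1 _ y] in
      \<open>simp add: R_G_apply lin_part_add[OF act] blinfun.add_left blinfun.add_right\<close>)

lemma R_G_scaleR: "R_G act M (c *\<^sub>R x) = c *\<^sub>R R_G act M x"
  by (rule blinfun_eqI)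
    (use mean_lincomb[OF orbit_coefficient_mem orbit_coefficient_mem, of c _ x 0 _ x] in
      \<open>simp add: R_G_apply lin_part_scaleR[OF act] blinfun.scaleR_left blinfun.scaleR_right\<close>)

lemma linear_R_G: "linear (R_G act M)"
  by (rule linearI) (simp_all add: R_G_add R_G_scaleR)

lemma bidual_act_R_G: "bidual_act act g (R_G act M x) = R_G act M x"
proof (rule blinfun_eqI)
  fix xs :: "'x \<Rightarrow>\<^sub>L real"
  have "blinfun_apply (bidual_act act g (R_G act M x)) xs =
      M (\<lambda>h. blinfun_apply xs (lin_part act (g + h) x))"
    by (simp add: bidual_act_apply[OF act] R_G_apply dual_act_apply[OF act] lin_part_add_group[OF act])
  also have "\<dots> = blinfun_apply (R_G act M x) xs"
    by (simp add: R_G_apply mean_left_translate[OF orbit_coefficient_mem])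
  finally show "blinfun_apply (bidual_act act g (R_G act M x)) xs = blinfun_apply (R_G act M x) xs" .
qed

lemma R_G_fixed: "x \<in> I_G act \<Longrightarrow> R_G act M x = kappa x"
  by (rule blinfun_eqI) (simp add: R_G_apply kappa_apply I_G_def mean_const)

lemma Q_kappa: "Q (kappa x) = kappa x"
proof -
  have "kappa x \<in> range (blinfun_apply Q)" using Q_range by simp
  then obtain \<zeta> where "kappa x = Q \<zeta>" by blast
  then show ?thesis using Q_idem by simp
qed

lemma Q_bidual_act_Q: "Q (bidual_act act g (Q \<zeta>)) = Q (bidual_act act g \<zeta>)"
proof -
  have "Q (\<zeta> - Q \<zeta>) = 0" using Q_idem by (simp add: blinfun.diff_right)
  then have "Q (bidual_act act g (\<zeta> - Q \<zeta>)) = 0" using Q_ker by blast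
  then show ?thesis by (simp add: bidual_act_diff[OF act] blinfun.diff_right)
qed

lemma kappa_P_G: "kappa (P_G act M Q x) = Q (R_G act M x)"
  unfolding P_G_def by (rule f_inv_into_f) (use Q_range in blast)

lemma P_G_fixed: "x \<in> I_G act \<Longrightarrow> P_G act M Q x = x"
  using kappa_P_G[of x] by (simp add: R_G_fixed Q_kappa inj_eq[OF inj_kappa])

lemma P_G_mem_I_G: "P_G act M Q x \<in> I_G act"
proof -
  have "kappa (lin_part act g (P_G act M Q x)) = kappa (P_G act M Q x)" for g
  proof -
    have "kappa (lin_part act g (P_G act M Q x)) = Q (kappa (lin_part act g (P_G act M Q x)))"
      by (rule Q_kappa[symmetric])
    also have "\<dots> = Q (bidual_act act g (Q (R_G act M x)))"
      by (simp add: kappa_P_G bidual_act_kappa[OF act, symmetric])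
    also have "\<dots> = kappa (P_G act M Q x)"
      by (simp add: Q_bidual_act_Q bidual_act_R_G kappa_P_G)
    finally show ?thesis .
  qed
  then show ?thesis unfolding I_G_def by (simp add: inj_eq[OF inj_kappa])
qed

lemma P_G_add: "P_G act M Q (x + y) = P_G act M Q x + P_G act M Q y"
  using kappa_P_G[of "x + y"]
  by (simp add: inj_eq[OF inj_kappa, symmetric] kappa_add kappa_P_G R_G_add blinfun.add_right)

lemma P_G_scaleR: "P_G act M Q (c *\<^sub>R x) = c *\<^sub>R P_G act M Q x"
  using kappa_P_G[of "c *\<^sub>R x"]
  by (simp add: inj_eq[OF inj_kappa, symmetric] kappa_scaleR kappa_P_G R_G_scaleR blinfun.scaleR_right)

lemma norm_P_G_le: "norm (P_G act M Q x) \<le> norm Q * norm x"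
proof -
  have "norm (P_G act M Q x) = norm (Q (R_G act M x))" by (metis kappa_P_G norm_kappa)
  also have "\<dots> \<le> norm Q * norm (R_G act M x)" by (rule norm_blinfun)
  also have "\<dots> \<le> norm Q * norm x" by (intro mult_left_mono norm_R_G_le norm_ge_zero)
  finally show ?thesis .
qed

lemma bounded_linear_P_G: "bounded_linear (P_G act M Q)"
  by (rule bounded_linear_intro[of _ "norm Q"])
    (simp_all add: P_G_add P_G_scaleR norm_P_G_le mult.commute[of _ "norm Q"])

lemma onorm_P_G_le: "onorm (P_G act M Q) \<le> norm Q"
  by (rule onorm_bound) (simp_all add: norm_P_G_le mult.commute[of _ "norm Q"])

lemma P_G_idem: "P_G act M Q (P_G act M Q x) = P_G act M Q x"
  by (rule P_G_fixed[OF P_G_mem_I_G])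

lemma range_P_G: "range (P_G act M Q) = I_G act"
proof
  show "range (P_G act M Q) \<subseteq> I_G act" using P_G_mem_I_G by blast
  show "I_G act \<subseteq> range (P_G act M Q)" using P_G_fixed by (metis rangeI subsetI)
qed

lemma kappa_range_P_G_subset: "kappa ` range (P_G act M Q) \<subseteq> range (R_G act M)"
  using R_G_fixed[OF P_G_mem_I_G] by (auto simp flip: R_G_fixed[OF P_G_mem_I_G])

lemma Q_image_range_R_G: "blinfun_apply Q ` range (R_G act M) = kappa ` range (P_G act M Q)"
  by (auto simp: kappa_P_G image_iff)

lemma R_G_orbit_zero:
  assumes "\<And>xs. (\<lambda>g. blinfun_apply xs (act g 0)) \<in> D"
  shows "R_G act M (act g 0) = 0"
proof (rule blinfun_eqI)
  fix xs :: "'x \<Rightarrow>\<^sub>L real"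
  have "(\<lambda>h. blinfun_apply xs (lin_part act h (act g 0))) =
      (\<lambda>h. blinfun_apply xs (act (h + g) 0) - blinfun_apply xs (act h 0))"
    by (simp add: lin_part_orbit_zero[OF act] blinfun.diff_right)
  with orbit_coefficient_mem[of xs "act g 0"] show "blinfun_apply (R_G act M (act g 0)) xs = blinfun_apply 0 xs"
    by (simp add: R_G_apply mean_right_difference[OF assms])
qed

lemma R_G_lin_part: "R_G act M (lin_part act g x) = R_G act M x"
  by (rule blinfun_eqI)
    (simp add: R_G_apply lin_part_add_group[OF act, symmetric] mean_right_translate[OF orbit_coefficient_mem])

lemma P_G_act:
  assumes "\<And>xs. (\<lambda>g. blinfun_apply xs (act g 0)) \<in> D"
  shows "P_G act M Q (act g x) = P_G act M Q x"
proof -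
  have "act g x = lin_part act g x + act g 0" by (simp add: lin_part_def)
  then have "R_G act M (act g x) = R_G act M x"
    by (simp add: R_G_add R_G_lin_part R_G_orbit_zero[OF assms])
  then show ?thesis unfolding P_G_def by simp
qed

end

section \<open>Coefficient functions of orbits\<close>

lemma nbhd_of_zero_Int: "nbhd_of_zero U \<Longrightarrow> nbhd_of_zero V \<Longrightarrow> nbhd_of_zero (U \<inter> V)"
  unfolding nbhd_of_zero_def by (meson Int_iff Int_mono open_Int)

lemma nbhd_of_zero_UNIV: "nbhd_of_zero UNIV"
  unfolding nbhd_of_zero_def by blast

text \<open>Left and right uniform continuity are the two instances sh h x = h + x and
  sh h x = x + h of the following condition.\<close>

lemma unif_cont_lincomb:
  fixes sh :: "'g::topological_group_add \<Rightarrow> 'g \<Rightarrow> 'g" and f k :: "'g \<Rightarrow> real"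
  assumes f: "\<forall>\<epsilon>>0. \<exists>U. nbhd_of_zero U \<and> (\<forall>h\<in>U. \<forall>x. \<bar>f (sh h x) - f x\<bar> < \<epsilon>)"
    and k: "\<forall>\<epsilon>>0. \<exists>U. nbhd_of_zero U \<and> (\<forall>h\<in>U. \<forall>x. \<bar>k (sh h x) - k x\<bar> < \<epsilon>)"
  shows "\<forall>\<epsilon>>0. \<exists>U. nbhd_of_zero U \<and>
    (\<forall>h\<in>U. \<forall>x. \<bar>(a * f (sh h x) + b * k (sh h x)) - (a * f x + b * k x)\<bar> < \<epsilon>)"
proof (intro allI impI)
  fix \<epsilon> :: real
  assume "\<epsilon> > 0"
  define \<delta> where "\<delta> = \<epsilon> / (\<bar>a\<bar> + \<bar>b\<bar> + 1)"
  have "\<delta> > 0" using \<open>\<epsilon> > 0\<close> by (simp add: \<delta>_def)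
  then obtain U V where "nbhd_of_zero U" "\<forall>h\<in>U. \<forall>x. \<bar>f (sh h x) - f x\<bar> < \<delta>"
    and "nbhd_of_zero V" "\<forall>h\<in>V. \<forall>x. \<bar>k (sh h x) - k x\<bar> < \<delta>"
    using f k by meson
  moreover have "\<bar>(a * f (sh h x) + b * k (sh h x)) - (a * f x + b * k x)\<bar> < \<epsilon>"
    if "\<bar>f (sh h x) - f x\<bar> < \<delta>" "\<bar>k (sh h x) - k x\<bar> < \<delta>" for h x
  proof -
    have "\<bar>(a * f (sh h x) + b * k (sh h x)) - (a * f x + b * k x)\<bar>
        \<le> \<bar>a\<bar> * \<bar>f (sh h x) - f x\<bar> + \<bar>b\<bar> * \<bar>k (sh h x) - k x\<bar>"
      by (simp add: abs_mult[symmetric] algebra_simps abs_triangle_ineq[of "a * f (sh h x) - a * f x"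
            "b * k (sh h x) - b * k x", simplified])
    also have "\<dots> \<le> (\<bar>a\<bar> + \<bar>b\<bar>) * \<delta>"
      using that by (simp add: distrib_right add_mono mult_left_mono)
    also have "\<dots> < \<epsilon>" using \<open>\<delta> > 0\<close> \<open>\<epsilon> > 0\<close> by (simp add: \<delta>_def field_simps)
    finally show ?thesis .
  qed
  ultimately show "\<exists>U. nbhd_of_zero U \<and>
      (\<forall>h\<in>U. \<forall>x. \<bar>(a * f (sh h x) + b * k (sh h x)) - (a * f x + b * k x)\<bar> < \<epsilon>)"
    by (intro exI[of _ "U \<inter> V"]) (simp add: nbhd_of_zero_Int)
qed

lemma UCb_lincomb: "f \<in> UCb \<Longrightarrow> k \<in> UCb \<Longrightarrow> (\<lambda>x. a * f x + b * k x) \<in> UCb"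
  unfolding UCb_def left_unif_cont_def right_unif_cont_def
  using bounded_plus_comp[OF bounded_scaleR_comp[of f UNIV a] bounded_scaleR_comp[of k UNIV b]]
    unif_cont_lincomb[where sh = "\<lambda>h x. h + x" and f = f and k = k and a = a and b = b]
    unif_cont_lincomb[where sh = "\<lambda>h x. x + h" and f = f and k = k and a = a and b = b]
  by simp

lemma Linf_lincomb: "f \<in> Linf \<mu> \<Longrightarrow> k \<in> Linf \<mu> \<Longrightarrow> (\<lambda>x. a * f x + b * k x) \<in> Linf \<mu>"
proof -
  assume f: "f \<in> Linf \<mu>" and k: "k \<in> Linf \<mu>"
  then obtain C D where "AE x in \<mu>. \<bar>f x\<bar> \<le> C" "AE x in \<mu>. \<bar>k x\<bar> \<le> D"
    unfolding Linf_def by auto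
  then have "AE x in \<mu>. \<bar>a * f x + b * k x\<bar> \<le> \<bar>a\<bar> * C + \<bar>b\<bar> * D"
  proof eventually_elim
    case (elim x)
    have "\<bar>a * f x + b * k x\<bar> \<le> \<bar>a\<bar> * \<bar>f x\<bar> + \<bar>b\<bar> * \<bar>k x\<bar>"
      by (metis abs_mult abs_triangle_ineq)
    also have "\<dots> \<le> \<bar>a\<bar> * C + \<bar>b\<bar> * D" using elim by (intro add_mono mult_left_mono) auto
    finally show ?case .
  qed
  with f k show ?thesis unfolding Linf_def by auto
qed

lemma UCb_const_one: "(\<lambda>_. 1) \<in> UCb"
  unfolding UCb_def left_unif_cont_def right_unif_cont_def using nbhd_of_zero_UNIV by auto

lemma Linf_const_one: "(\<lambda>_. 1) \<in> Linf \<mu>"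
  unfolding Linf_def by auto

lemma invariant_mean_space_UCb: "bi_invariant_mean_on UCb M \<Longrightarrow> invariant_mean_space UCb M"
  by (rule invariant_mean_space.intro) (simp_all add: UCb_lincomb UCb_const_one)

lemma invariant_mean_space_Linf:
  "bi_invariant_mean_Linf \<mu> M \<Longrightarrow> invariant_mean_space (Linf \<mu>) M"
  by (rule invariant_mean_space.intro)
    (simp_all add: Linf_lincomb Linf_const_one bi_invariant_mean_Linf_def)

text \<open>In a SIN group the conjugation-invariant neighbourhoods convert right uniform
  continuity into left uniform continuity, as h + x = x + (- x + h + x).\<close>

lemma left_unif_cont_if_right_unif_cont:
  assumes "SIN_group TYPE('g::topological_group_add)" and f: "right_unif_cont (f :: 'g \<Rightarrow> real)"
  shows "left_unif_cont f"
  unfolding left_unif_cont_def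
proof (intro allI impI)
  fix \<epsilon> :: real
  assume "\<epsilon> > 0"
  then obtain U where U: "nbhd_of_zero U" "\<forall>h\<in>U. \<forall>x. \<bar>f (x + h) - f x\<bar> < \<epsilon>"
    using f unfolding right_unif_cont_def by blast
  then obtain V where V: "nbhd_of_zero V" "V \<subseteq> U" "\<And>g. (\<lambda>v. g + v - g) ` V = V"
    using assms(1) unfolding SIN_group_def by blast
  have "\<bar>f (h + x) - f x\<bar> < \<epsilon>" if "h \<in> V" for h x
  proof -
    have "- x + h + x \<in> U" using V(2) V(3)[of "- x"] that by (force simp: diff_conv_add_uminus)
    then have "\<bar>f (x + (- x + h + x)) - f x\<bar> < \<epsilon>" using U(2) by blast
    then show ?thesis by (simp add: add.assoc[symmetric])
  qed
  with V(1) show "\<exists>U. nbhd_of_zero U \<and> (\<forall>h\<in>U. \<forall>x. \<bar>f (h + x) - f x\<bar> < \<epsilon>)" by blast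
qed

lemma right_unif_cont_functional_comp:
  fixes F :: "'g::topological_group_add \<Rightarrow> 'x::real_normed_vector"
  assumes cont: "continuous_on UNIV F"
    and increment: "\<And>g h. norm (F (g + h) - F g) = norm (F h - F 0)"
  shows "right_unif_cont (\<lambda>g. blinfun_apply xs (F g))"
  unfolding right_unif_cont_def
proof (intro allI impI)
  fix \<epsilon> :: real
  assume "\<epsilon> > 0"
  define \<delta> where "\<delta> = \<epsilon> / (norm xs + 1)"
  have "\<delta> > 0" using \<open>\<epsilon> > 0\<close> by (simp add: \<delta>_def add_nonneg_pos)
  define U where "U = (\<lambda>h. F h - F 0) -` ball 0 \<delta>"
  have "continuous_on UNIV (\<lambda>h. F h - F 0)" by (intro continuous_intros cont)
  then have "open U" unfolding U_def by (rule open_vimage[OF open_ball])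
  then have "nbhd_of_zero U" using \<open>\<delta> > 0\<close> unfolding nbhd_of_zero_def U_def by auto
  moreover have "\<bar>blinfun_apply xs (F (x + h)) - blinfun_apply xs (F x)\<bar> < \<epsilon>" if "h \<in> U" for h x
  proof -
    have "norm (F (x + h) - F x) < \<delta>"
      using that increment[of x h] by (simp add: U_def dist_norm norm_minus_commute)
    then have "norm xs * norm (F (x + h) - F x) \<le> norm xs * \<delta>" by (simp add: mult_left_mono)
    moreover have "\<bar>blinfun_apply xs (F (x + h)) - blinfun_apply xs (F x)\<bar> \<le> norm xs * norm (F (x + h) - F x)"
      using norm_blinfun[of xs "F (x + h) - F x"] by (simp add: blinfun.diff_right)
    moreover have "norm xs * \<delta> < (norm xs + 1) * \<delta>" using \<open>\<delta> > 0\<close> by simp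
    moreover have "(norm xs + 1) * \<delta> = \<epsilon>"
      using norm_ge_zero[of xs] unfolding \<delta>_def by (simp add: add_nonneg_eq_0_iff)
    ultimately show ?thesis by linarith
  qed
  ultimately show "\<exists>U. nbhd_of_zero U \<and>
      (\<forall>h\<in>U. \<forall>x. \<bar>blinfun_apply xs (F (x + h)) - blinfun_apply xs (F x)\<bar> < \<epsilon>)"
    by blast
qed

lemma functional_comp_mem_UCb:
  fixes F :: "'g::topological_group_add \<Rightarrow> 'x::real_normed_vector"
  assumes "SIN_group TYPE('g)" and "continuous_on UNIV F" and "bounded (range F)"
    and "\<And>g h. norm (F (g + h) - F g) = norm (F h - F 0)"
  shows "(\<lambda>g. blinfun_apply xs (F g)) \<in> UCb"
  using bounded_linear_image[OF assms(3) blinfun.bounded_linear_right, of xs]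
    right_unif_cont_functional_comp[OF assms(2,4)]
    left_unif_cont_if_right_unif_cont[OF assms(1)]
  unfolding UCb_def by (simp add: image_image)

lemma functional_comp_mem_Linf:
  fixes F :: "'g::topological_space \<Rightarrow> 'x::real_normed_vector"
  assumes sets: "sets \<mu> = sets borel" and cont: "continuous_on UNIV F" and "bounded (range F)"
  shows "(\<lambda>g. blinfun_apply xs (F g)) \<in> Linf \<mu>"
proof -
  have "continuous_on UNIV (\<lambda>g. blinfun_apply xs (F g))"
    by (intro continuous_intros cont)
  then have "(\<lambda>g. blinfun_apply xs (F g)) \<in> borel_measurable \<mu>"
    using borel_measurable_continuous_onI measurable_cong_sets[OF sets refl] by blast
  moreover obtain B where B: "\<And>g. norm (F g) \<le> B"
    using \<open>bounded (range F)\<close> unfolding bounded_iff by auto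
  have "\<bar>blinfun_apply xs (F g)\<bar> \<le> norm xs * B" for g
  proof -
    have "\<bar>blinfun_apply xs (F g)\<bar> \<le> norm xs * norm (F g)" by (metis norm_blinfun real_norm_def)
    also have "\<dots> \<le> norm xs * B" by (rule mult_left_mono[OF B norm_ge_zero])
    finally show ?thesis .
  qed
  ultimately show ?thesis unfolding Linf_def by blast
qed

lemma mean_domain_for_orbit_maps:
  fixes M :: "('g::{topological_group_add, t2_space} \<Rightarrow> real) \<Rightarrow> real"
  assumes "(SIN_group TYPE('g) \<and> bi_invariant_mean_on UCb M) \<or>
      (locally_compact_space (euclidean :: 'g topology) \<and>
       (\<exists>\<mu>. left_haar_measure \<mu> \<and> bi_invariant_mean_Linf \<mu> M))"
  obtains D where "invariant_mean_space D M"
    and "\<And>(F :: 'g \<Rightarrow> 'x::real_normed_vector) xs. continuous_on UNIV F \<Longrightarrow> bounded (range F) \<Longrightarrow>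
      (\<And>g h. norm (F (g + h) - F g) = norm (F h - F 0)) \<Longrightarrow> (\<lambda>g. blinfun_apply xs (F g)) \<in> D"
  using assms
proof (elim disjE conjE exE)
  assume sin: "SIN_group TYPE('g)" and "bi_invariant_mean_on UCb M"
  show thesis
  proof (rule that)
    show "invariant_mean_space UCb M" by (rule invariant_mean_space_UCb) fact
    show "(\<lambda>g. blinfun_apply xs (F g)) \<in> UCb"
      if "continuous_on UNIV F" "bounded (range F)" "\<And>g h. norm (F (g + h) - F g) = norm (F h - F 0)"
      for F :: "'g \<Rightarrow> 'x" and xs
      using functional_comp_mem_UCb[OF sin that] .
  qed
next
  fix \<mu> assume haar: "left_haar_measure \<mu>" and "bi_invariant_mean_Linf \<mu> M"
  show thesis
  proof (rule that)
    show "invariant_mean_space (Linf \<mu>) M" by (rule invariant_mean_space_Linf) fact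
    have sets: "sets \<mu> = sets borel" using haar unfolding left_haar_measure_def by (elim conjE)
    show "(\<lambda>g. blinfun_apply xs (F g)) \<in> Linf \<mu>"
      if "continuous_on UNIV F" "bounded (range F)" for F :: "'g \<Rightarrow> 'x" and xs
      by (rule functional_comp_mem_Linf[OF sets that])
  qed
qed

lemma continuous_on_orbit:
  "continuous_on UNIV (\<lambda>p. act (fst p) (snd p)) \<Longrightarrow> continuous_on UNIV (\<lambda>g. act g y)"
  using continuous_on_compose2[of UNIV "\<lambda>p. act (fst p) (snd p)" UNIV "\<lambda>g. (g, y)"]
  by (simp add: continuous_on_Pair)

lemma continuous_on_lin_part_orbit:
  assumes "continuous_on UNIV (\<lambda>p. act (fst p) (snd p))"
  shows "continuous_on UNIV (\<lambda>g. lin_part act g x)"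
  unfolding lin_part_def by (intro continuous_on_diff continuous_on_orbit[OF assms])

theorem theorem3p3:
  fixes act :: "'g::{topological_group_add, t2_space} \<Rightarrow> 'x::banach \<Rightarrow> 'x"
    and M :: "('g \<Rightarrow> real) \<Rightarrow> real"
    and Q :: "(('x \<Rightarrow>\<^sub>L real) \<Rightarrow>\<^sub>L real) \<Rightarrow>\<^sub>L (('x \<Rightarrow>\<^sub>L real) \<Rightarrow>\<^sub>L real)"
  assumes amen: "amenable_group TYPE('g)"
    and act: "affine_isometric_action act"
    and act_cont: "continuous_on UNIV (\<lambda>p. act (fst p) (snd p))"
    and mean: "(SIN_group TYPE('g) \<and> bi_invariant_mean_on UCb M) \<or>
               (locally_compact_space (euclidean :: 'g topology) \<and>
                (\<exists>\<mu>. left_haar_measure \<mu> \<and> bi_invariant_mean_Linf \<mu> M))"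
    and Q_proj: "\<forall>\<zeta>. Q (Q \<zeta>) = Q \<zeta>"
    and Q_range: "range (blinfun_apply Q) = range kappa"
    and Q_ker: "\<forall>g \<zeta>. Q \<zeta> = 0 \<longrightarrow> Q (bidual_act act g \<zeta>) = 0"
  shows "bounded_linear (P_G act M Q) \<and>
         (\<forall>x. P_G act M Q (P_G act M Q x) = P_G act M Q x) \<and>
         onorm (P_G act M Q) \<le> norm Q \<and>
         range (P_G act M Q) = I_G act \<and>
         subspace (range (R_G act M)) \<and>
         kappa ` range (P_G act M Q) \<subseteq> range (R_G act M) \<and>
         blinfun_apply Q ` range (R_G act M) = kappa ` range (P_G act M Q) \<and>
         ((\<exists>x. bounded (range (\<lambda>g. act g x))) \<longrightarrow>
            (\<forall>g x. P_G act M Q (act g x) = P_G act M Q x))"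
proof -
  obtain D where D: "invariant_mean_space D M"
    and orbit_mem: "\<And>(F :: 'g \<Rightarrow> 'x) xs. continuous_on UNIV F \<Longrightarrow> bounded (range F) \<Longrightarrow>
      (\<And>g h. norm (F (g + h) - F g) = norm (F h - F 0)) \<Longrightarrow> (\<lambda>g. blinfun_apply xs (F g)) \<in> D"
    using mean_domain_for_orbit_maps[OF mean] by blast
  interpret invariant_projection D M act Q
    using D act Q_proj Q_range Q_ker
      orbit_mem[OF continuous_on_lin_part_orbit[OF act_cont] bounded_lin_part_orbit[OF act]
        norm_lin_part_increment[OF act]]
    by (intro invariant_projection.intro invariant_projection_axioms.intro)
  have "P_G act M Q (act g x) = P_G act M Q x" if "bounded (range (\<lambda>g. act g y))" for g x y
    using orbit_mem[OF continuous_on_orbit[OF act_cont] bounded_orbit_zero[OF act that]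
        norm_orbit_zero_increment[OF act]]
    by (rule P_G_act)
  then show ?thesis
    using bounded_linear_P_G P_G_idem onorm_P_G_le range_P_G kappa_range_P_G_subset Q_image_range_R_G
      linear_subspace_image[OF linear_R_G subspace_UNIV] by blast
qed

end
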